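(* Let $H$ be a group, $K\lneq H$, $\phi\in\operatorname{Aut}(H)$, $G=\langle H,t;\ tkt^{-1}=\phi(k),\ k\in K\rangle$. Let $g\in G$ and $x,y\in H$ satisfy $g^{-1}ytg=x^{-1}\phi(x)t$ and $g^{-1}hg=x^{-1}hx$ for all $h\in H$. Then $g\in K$. *)

theory Defs
  imports "HOL-Algebra.Algebra"
begin

text \<open>HNN extension G = < H, t ; t k t^-1 = phi(k), k in K > given by its presentation:
  words in letters Gen h (h in carrier H), T (= t), Tinv (= t^-1), modulo the
  congruence generated by the relations of H, t t^-1 = 1 = t^-1 t, and t k t^-1 = phi k.\<close>

datatype 'a hnn_letter = Gen 'a | T | Tinv

definition hnn_word :: "('a, 'b) monoid_scheme \<Rightarrow> 'a hnn_letter list \<Rightarrow> bool" where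
  "hnn_word H w \<longleftrightarrow> (\<forall>l \<in> set w. case l of Gen h \<Rightarrow> h \<in> carrier H | _ \<Rightarrow> True)"

inductive hnn_rel :: "('a, 'b) monoid_scheme \<Rightarrow> 'a set \<Rightarrow> ('a \<Rightarrow> 'a)
    \<Rightarrow> 'a hnn_letter list \<Rightarrow> 'a hnn_letter list \<Rightarrow> bool"
  for H K \<phi> where
  mult: "\<lbrakk>hnn_word H u; hnn_word H v; h1 \<in> carrier H; h2 \<in> carrier H\<rbrakk> \<Longrightarrow>
     hnn_rel H K \<phi> (u @ [Gen h1, Gen h2] @ v) (u @ [Gen (h1 \<otimes>\<^bsub>H\<^esub> h2)] @ v)"
| one: "\<lbrakk>hnn_word H u; hnn_word H v\<rbrakk> \<Longrightarrow>
     hnn_rel H K \<phi> (u @ [Gen \<one>\<^bsub>H\<^esub>] @ v) (u @ v)"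
| t_tinv: "\<lbrakk>hnn_word H u; hnn_word H v\<rbrakk> \<Longrightarrow>
     hnn_rel H K \<phi> (u @ [T, Tinv] @ v) (u @ v)"
| tinv_t: "\<lbrakk>hnn_word H u; hnn_word H v\<rbrakk> \<Longrightarrow>
     hnn_rel H K \<phi> (u @ [Tinv, T] @ v) (u @ v)"
| conj: "\<lbrakk>hnn_word H u; hnn_word H v; k \<in> K; k \<in> carrier H; \<phi> k \<in> carrier H\<rbrakk> \<Longrightarrow>
     hnn_rel H K \<phi> (u @ [T, Gen k, Tinv] @ v) (u @ [Gen (\<phi> k)] @ v)"
| refl: "hnn_word H w \<Longrightarrow> hnn_rel H K \<phi> w w"
| sym: "hnn_rel H K \<phi> a b \<Longrightarrow> hnn_rel H K \<phi> b a"
| trans: "hnn_rel H K \<phi> a b \<Longrightarrow> hnn_rel H K \<phi> b c \<Longrightarrow> hnn_rel H K \<phi> a c"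

definition HNN :: "('a, 'b) monoid_scheme \<Rightarrow> 'a set \<Rightarrow> ('a \<Rightarrow> 'a)
    \<Rightarrow> 'a hnn_letter list set monoid" where
  "HNN H K \<phi> = \<lparr>carrier = {w. hnn_word H w} // {(a, b). hnn_rel H K \<phi> a b},
     monoid.mult = (\<lambda>A B. \<Union>a\<in>A. \<Union>b\<in>B. {c. hnn_rel H K \<phi> (a @ b) c}),
     monoid.one = {c. hnn_rel H K \<phi> [] c}\<rparr>"

definition hnn_emb :: "('a, 'b) monoid_scheme \<Rightarrow> 'a set \<Rightarrow> ('a \<Rightarrow> 'a) \<Rightarrow> 'a \<Rightarrow> 'a hnn_letter list set" where
  "hnn_emb H K \<phi> h = {c. hnn_rel H K \<phi> [Gen h] c}"

definition hnn_t :: "('a, 'b) monoid_scheme \<Rightarrow> 'a set \<Rightarrow> ('a \<Rightarrow> 'a) \<Rightarrow> 'a hnn_letter list set" where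
  "hnn_t H K \<phi> = {c. hnn_rel H K \<phi> [T] c}"

end

theory Submission
  imports Defs
begin

text \<open>The HNN extension acts on Britton normal forms \<open>c t\<^sup>e\<^sup>1 r\<^sub>1 \<cdots> t\<^sup>e\<^sup>n r\<^sub>n\<close>
  (van der Waerden's trick). The action respects the defining relations, and acting by a word
  on the trivial normal form yields a normal form equal to that word, so two words are equal in
  the HNN extension iff they have the same normal form.

  The second hypothesis says that \<open>z = g x\<inverse>\<close> centralises \<open>H\<close>. Right multiplication of a
  normal form by \<open>h \<in> H\<close> leaves its length unchanged and replaces the last representative
  \<open>r\<^sub>n\<close> by the representative of \<open>r\<^sub>n h\<close>; if \<open>z \<notin> H\<close>, comparing the normal forms of \<open>h z\<close> and
  \<open>z h\<close> forces \<open>r\<^sub>n H r\<^sub>n\<inverse>\<close> into \<open>K\<close> or \<open>\<phi> K\<close>, i.e. \<open>K = H\<close>. So \<open>g = w \<in> H\<close>, and the first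
  hypothesis becomes \<open>a t w = b t\<close> with \<open>a, b \<in> H\<close>, whose normal forms
  \<open>a' t (rep w)\<close> and \<open>b' t 1\<close> agree only if \<open>w \<in> K\<close>.\<close>

lemma hnn_word_simps [simp]:
  "hnn_word H []"
  "hnn_word H (a # w) \<longleftrightarrow> (case a of Gen h \<Rightarrow> h \<in> carrier H | _ \<Rightarrow> True) \<and> hnn_word H w"
  "hnn_word H (u @ v) \<longleftrightarrow> hnn_word H u \<and> hnn_word H v"
  by (auto simp: hnn_word_def)

lemma hnn_rel_words:
  "hnn_rel H K \<phi> a b \<Longrightarrow> group H \<Longrightarrow> hnn_word H a \<and> hnn_word H b"
  by (induction rule: hnn_rel.induct) (auto simp: group.is_monoid monoid.m_closed)

declare hnn_rel.trans [trans]

lemma hnn_rel_cong: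
  assumes "hnn_rel H K \<phi> a b" "hnn_word H u" "hnn_word H v"
  shows "hnn_rel H K \<phi> (u @ a @ v) (u @ b @ v)"
  using assms
proof (induction rule: hnn_rel.induct)
  case (mult u' v' h1 h2)
  then show ?case using hnn_rel.mult[of H "u @ u'" "v' @ v" h1 h2 K \<phi>] by simp
next
  case (one u' v')
  then show ?case using hnn_rel.one[of H "u @ u'" "v' @ v" K \<phi>] by simp
next
  case (t_tinv u' v')
  then show ?case using hnn_rel.t_tinv[of H "u @ u'" "v' @ v" K \<phi>] by simp
next
  case (tinv_t u' v')
  then show ?case using hnn_rel.tinv_t[of H "u @ u'" "v' @ v" K \<phi>] by simp
next
  case (conj u' v' k)
  then show ?case using hnn_rel.conj[of H "u @ u'" "v' @ v" k K \<phi>] by simp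
qed (auto intro: hnn_rel.intros)

lemma hnn_rel_append:
  assumes "group H" "hnn_rel H K \<phi> a a'" "hnn_rel H K \<phi> b b'"
  shows "hnn_rel H K \<phi> (a @ b) (a' @ b')"
proof -
  have "hnn_rel H K \<phi> ([] @ a @ b) ([] @ a' @ b)"
    using assms hnn_rel_words[OF assms(3,1)] by (intro hnn_rel_cong) auto
  also have "hnn_rel H K \<phi> ([] @ a' @ b) (a' @ b' @ [])"
    using assms hnn_rel_words[OF assms(2,1)] hnn_rel_cong[of H K \<phi> b b' a' "[]"] by auto
  finally show ?thesis by simp
qed

lemma hnn_rel_mult_letters:
  "h1 \<in> carrier H \<Longrightarrow> h2 \<in> carrier H \<Longrightarrow> hnn_rel H K \<phi> [Gen h1, Gen h2] [Gen (h1 \<otimes>\<^bsub>H\<^esub> h2)]"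
  using hnn_rel.mult[of H "[]" "[]"] by simp

lemma hnn_rel_one_letter: "hnn_rel H K \<phi> [Gen \<one>\<^bsub>H\<^esub>] []"
  using hnn_rel.one[of H "[]" "[]"] by simp

abbreviation hnn_class :: "('a, 'b) monoid_scheme \<Rightarrow> 'a set \<Rightarrow> ('a \<Rightarrow> 'a)
    \<Rightarrow> 'a hnn_letter list \<Rightarrow> 'a hnn_letter list set" where
  "hnn_class H K \<phi> w \<equiv> {c. hnn_rel H K \<phi> w c}"

lemma hnn_class_eq_iff:
  assumes "group H" "hnn_word H b"
  shows "hnn_class H K \<phi> a = hnn_class H K \<phi> b \<longleftrightarrow> hnn_rel H K \<phi> a b"
  using assms by (auto intro: hnn_rel.refl hnn_rel.sym hnn_rel.trans)

lemma carrier_HNN: "carrier (HNN H K \<phi>) = hnn_class H K \<phi> ` {w. hnn_word H w}"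
  by (auto simp: HNN_def quotient_def Image_def)

lemma one_HNN: "\<one>\<^bsub>HNN H K \<phi>\<^esub> = hnn_class H K \<phi> []"
  by (simp add: HNN_def)

lemma mult_HNN:
  assumes "group H" "hnn_word H a" "hnn_word H b"
  shows "hnn_class H K \<phi> a \<otimes>\<^bsub>HNN H K \<phi>\<^esub> hnn_class H K \<phi> b = hnn_class H K \<phi> (a @ b)"
proof -
  have "hnn_rel H K \<phi> a a" "hnn_rel H K \<phi> b b"
    using assms by (auto intro: hnn_rel.refl)
  moreover have "hnn_rel H K \<phi> (a @ b) c"
    if "hnn_rel H K \<phi> a a'" "hnn_rel H K \<phi> b b'" "hnn_rel H K \<phi> (a' @ b') c" for a' b' c
    using that hnn_rel_append[OF assms(1)] hnn_rel.trans by blast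
  ultimately show ?thesis unfolding HNN_def by auto
qed

primrec inv_letter :: "('a, 'b) monoid_scheme \<Rightarrow> 'a hnn_letter \<Rightarrow> 'a hnn_letter" where
  "inv_letter H (Gen h) = Gen (inv\<^bsub>H\<^esub> h)"
| "inv_letter H T = Tinv"
| "inv_letter H Tinv = T"

lemma hnn_rel_inv_letter:
  assumes "group H" "hnn_word H [a]"
  shows "hnn_word H [inv_letter H a]" "hnn_rel H K \<phi> [inv_letter H a, a] []"
proof -
  show "hnn_word H [inv_letter H a]"
    using assms by (cases a) (auto simp: group.inv_closed)
  show "hnn_rel H K \<phi> [inv_letter H a, a] []"
  proof (cases a)
    case (Gen h)
    then have "hnn_rel H K \<phi> [inv_letter H a, a] [Gen \<one>\<^bsub>H\<^esub>]"
      using assms hnn_rel_mult_letters[of "inv\<^bsub>H\<^esub> h" H h] by (simp add: group.l_inv)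
    then show ?thesis using hnn_rel_one_letter hnn_rel.trans by blast
  qed (use hnn_rel.t_tinv[of H "[]" "[]"] hnn_rel.tinv_t[of H "[]" "[]"] in simp_all)
qed

lemma hnn_rel_inv_word:
  assumes "group H" "hnn_word H w"
  shows "hnn_word H (rev (map (inv_letter H) w))
    \<and> hnn_rel H K \<phi> (rev (map (inv_letter H) w) @ w) []"
  using assms(2)
proof (induction w)
  case (Cons a w)
  let ?v = "rev (map (inv_letter H) w)"
  have a: "hnn_word H [a]" using Cons.prems by (cases a) auto
  have "hnn_rel H K \<phi> (?v @ [inv_letter H a, a] @ w) (?v @ [] @ w)"
    using Cons a by (intro hnn_rel_cong hnn_rel_inv_letter assms) auto
  then show ?case using Cons a hnn_rel_inv_letter(1)[OF assms(1) a] by (auto intro: hnn_rel.trans)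
qed (auto intro: hnn_rel.refl)

lemma group_HNN:
  assumes "group H"
  shows "group (HNN H K \<phi>)"
proof (rule groupI)
  show "\<one>\<^bsub>HNN H K \<phi>\<^esub> \<in> carrier (HNN H K \<phi>)"
    by (auto simp: carrier_HNN one_HNN)
next
  fix a assume "a \<in> carrier (HNN H K \<phi>)"
  then obtain w where w: "hnn_word H w" "a = hnn_class H K \<phi> w"
    by (auto simp: carrier_HNN)
  then show "\<exists>b\<in>carrier (HNN H K \<phi>). b \<otimes>\<^bsub>HNN H K \<phi>\<^esub> a = \<one>\<^bsub>HNN H K \<phi>\<^esub>"
    using hnn_rel_inv_word[OF assms w(1)] assms
    by (auto simp: carrier_HNN mult_HNN one_HNN hnn_class_eq_iff)
qed (auto simp: carrier_HNN mult_HNN one_HNN assms)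

lemma (in group) conj_eq_imp_commute:
  assumes "g \<in> carrier G" "a \<in> carrier G" "c \<in> carrier G"
    and "inv g \<otimes> a \<otimes> g = inv c \<otimes> a \<otimes> c"
  shows "a \<otimes> (g \<otimes> inv c) = (g \<otimes> inv c) \<otimes> a"
proof -
  have "a \<otimes> g = g \<otimes> (inv c \<otimes> a \<otimes> c)"
    using assms inv_solve_left' by (simp add: m_assoc)
  then have "a \<otimes> g \<otimes> inv c = g \<otimes> inv c \<otimes> a"
    using assms by (simp add: m_assoc)
  then show ?thesis using assms by (simp add: m_assoc)
qed

context group
begin

text \<open>The representative of \<open>S\<close> itself is \<open>\<one>\<close>, so \<open>coset_rep S a = \<one>\<close> detects \<open>a \<in> S\<close>.\<close>

definition coset_rep :: "'a set \<Rightarrow> 'a \<Rightarrow> 'a" where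
  "coset_rep S a = (if S #> a = S then \<one> else (SOME r. r \<in> S #> a))"

context
  fixes S assumes S: "subgroup S G"
begin

lemma coset_rep_in_coset: "a \<in> carrier G \<Longrightarrow> coset_rep S a \<in> S #> a"
  unfolding coset_rep_def
  using rcos_self[OF _ S] subgroup.one_closed[OF S] by (metis someI)

lemma coset_rep_carrier [simp]: "a \<in> carrier G \<Longrightarrow> coset_rep S a \<in> carrier G"
  using coset_rep_in_coset subgroup.elemrcos_carrier[OF S is_group] by blast

lemma coset_rep_factor: "a \<in> carrier G \<Longrightarrow> a \<otimes> inv coset_rep S a \<in> S"
  using coset_rep_in_coset subgroup.rcos_module_imp[OF S is_group]
  by (metis coset_rep_carrier inv_mult_group inv_inv subgroup.m_inv_closed[OF S] inv_closed)

lemma coset_rep_eq_one_iff: "a \<in> carrier G \<Longrightarrow> coset_rep S a = \<one> \<longleftrightarrow> a \<in> S"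
  unfolding coset_rep_def
  using coset_join1[OF _ _ S] coset_join2[OF _ S] coset_rep_in_coset repr_independence[OF _ _ S]
  by (metis coset_rep_def coset_mult_one subgroup.subset[OF S])

lemma coset_rep_cong: "S #> a = S #> b \<Longrightarrow> coset_rep S a = coset_rep S b"
  by (simp add: coset_rep_def)

lemma coset_rep_idem [simp]: "a \<in> carrier G \<Longrightarrow> coset_rep S (coset_rep S a) = coset_rep S a"
  using coset_rep_cong coset_rep_in_coset repr_independence[OF _ _ S] by metis

lemma coset_rep_mult_left:
  "k \<in> S \<Longrightarrow> a \<in> carrier G \<Longrightarrow> coset_rep S (k \<otimes> a) = coset_rep S a"
  using coset_rep_cong coset_mult_assoc subgroup.rcos_const[OF S is_group]
  by (metis subgroup.mem_carrier[OF S] subgroup.subset[OF S])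

lemma coset_rep_eqD:
  "a \<in> carrier G \<Longrightarrow> b \<in> carrier G \<Longrightarrow> coset_rep S a = coset_rep S b \<Longrightarrow> a \<otimes> inv b \<in> S"
  using coset_rep_in_coset repr_independence[OF _ _ S] rcos_self[OF _ S]
    subgroup.rcos_module_imp[OF S is_group] by metis

lemma coset_rep_right_mult_const_imp_carrier:
  assumes "r \<in> carrier G" and "\<And>h. h \<in> carrier G \<Longrightarrow> coset_rep S (r \<otimes> h) = coset_rep S r"
  shows "carrier G \<subseteq> S"
proof
  fix h assume h: "h \<in> carrier G"
  have "r \<otimes> (inv r \<otimes> h \<otimes> r) \<otimes> inv r \<in> S"
    using coset_rep_eqD assms h by simp
  then show "h \<in> S"
    using assms(1) h by (simp add: m_assoc[symmetric]) (simp add: m_assoc)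
qed

end

end

definition t_letter :: "bool \<Rightarrow> 'a hnn_letter" where
  "t_letter e = (if e then T else Tinv)"

lemma case_t_letter [simp]: "case_hnn_letter f a b (t_letter e) = (if e then a else b)"
  by (simp add: t_letter_def)

type_synonym 'a nf = "'a \<times> (bool \<times> 'a) list"

locale hnn_extension = group H for H :: "'a monoid" (structure) +
  fixes K :: "'a set" and \<phi> :: "'a \<Rightarrow> 'a"
  assumes subgroup_K: "subgroup K H" and iso_\<phi>: "\<phi> \<in> iso H H"
begin

sublocale \<phi>: group_hom H H \<phi>
  using iso_\<phi> by unfold_locales (simp add: iso_def)

text \<open>\<open>A True = K\<close> and \<open>A False = \<phi> K\<close> are the subgroups associated with \<open>t\<close> and \<open>t\<inverse>\<close>;
  \<open>tconj e k\<close> stands for \<open>t\<^sup>e k t\<^sup>-\<^sup>e\<close>.\<close>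

definition A :: "bool \<Rightarrow> 'a set" where
  "A e = (if e then K else \<phi> ` K)"

definition tconj :: "bool \<Rightarrow> 'a \<Rightarrow> 'a" where
  "tconj e = (if e then \<phi> else inv_into K \<phi>)"

lemma K_carrier: "k \<in> K \<Longrightarrow> k \<in> carrier H"
  using subgroup.mem_carrier[OF subgroup_K] .

lemma subgroup_A [simp]: "subgroup (A e) H"
  using subgroup_K \<phi>.subgroup_img_is_subgroup by (simp add: A_def)

lemma A_carrier: "k \<in> A e \<Longrightarrow> k \<in> carrier H"
  using subgroup.mem_carrier[OF subgroup_A] .

lemma inj_on_\<phi>_K: "inj_on \<phi> K"
  using iso_\<phi> K_carrier by (auto simp: iso_def bij_betw_def intro: inj_on_subset)

lemma tconj_in_A: "k \<in> A e \<Longrightarrow> tconj e k \<in> A (\<not> e)"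
  by (auto simp: A_def tconj_def inv_into_into)

lemma tconj_carrier: "k \<in> A e \<Longrightarrow> tconj e k \<in> carrier H"
  using A_carrier tconj_in_A by blast

lemma tconj_tconj [simp]: "k \<in> A e \<Longrightarrow> tconj (\<not> e) (tconj e k) = k"
  using inj_on_\<phi>_K by (auto simp: A_def tconj_def f_inv_into_f)

lemma A_ne_carrier:
  assumes "K \<noteq> carrier H"
  shows "A e \<noteq> carrier H"
proof
  assume A: "A e = carrier H"
  have "\<phi> ` carrier H = carrier H"
    using iso_\<phi> by (simp add: iso_def bij_betw_def)
  moreover have "inj_on \<phi> (carrier H)"
    using iso_\<phi> by (simp add: iso_def bij_betw_def)
  ultimately have "\<phi> ` K = \<phi> ` carrier H \<longleftrightarrow> K = carrier H"
    using K_carrier by (intro inj_on_image_eq_iff) auto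
  then show False
    using A assms \<open>\<phi> ` carrier H = carrier H\<close> by (cases e) (auto simp: A_def)
qed

lemma hnn_rel_t_cancel: "hnn_rel H K \<phi> [t_letter e, t_letter (\<not> e)] []"
  using hnn_rel.t_tinv[of H "[]" "[]"] hnn_rel.tinv_t[of H "[]" "[]"]
  by (cases e) (auto simp: t_letter_def)

lemma hnn_rel_tconj:
  assumes "k \<in> A e"
  shows "hnn_rel H K \<phi> [t_letter e, Gen k, t_letter (\<not> e)] [Gen (tconj e k)]"
proof (cases e)
  case True
  then show ?thesis
    using assms hnn_rel.conj[of H "[]" "[]" k] K_carrier by (simp add: A_def tconj_def t_letter_def)
next
  case False
  then obtain k0 where k0: "k0 \<in> K" "k = \<phi> k0" "tconj e k = k0"
    using assms inj_on_\<phi>_K by (auto simp: A_def tconj_def)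
  have k0_rel: "hnn_rel H K \<phi> [Gen k] [T, Gen k0, Tinv]"
    using hnn_rel.conj[of H "[]" "[]" k0] k0 K_carrier by (auto intro: hnn_rel.sym)
  have "hnn_rel H K \<phi> [Tinv, Gen k, T] [Tinv, T, Gen k0, Tinv, T]"
    using hnn_rel_cong[OF k0_rel, of "[Tinv]" "[T]"] by simp
  also have "hnn_rel H K \<phi> \<dots> [Gen k0, Tinv, T]"
    using hnn_rel_cong[OF hnn_rel_t_cancel[of False], of "[]" "[Gen k0, Tinv, T]"] k0 K_carrier
    by (simp add: t_letter_def)
  also have "hnn_rel H K \<phi> \<dots> [Gen k0]"
    using hnn_rel_cong[OF hnn_rel_t_cancel[of False], of "[Gen k0]" "[]"] k0 K_carrier
    by (simp add: t_letter_def)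
  finally show ?thesis using False k0 by (simp add: t_letter_def)
qed

text \<open>A normal form \<open>(c, [(e\<^sub>1, r\<^sub>1), \<dots>, (e\<^sub>n, r\<^sub>n)])\<close> stands for the element
  \<open>c t\<^sup>e\<^sup>1 r\<^sub>1 \<cdots> t\<^sup>e\<^sup>n r\<^sub>n\<close> of the HNN extension, each \<open>r\<^sub>i\<close> being the chosen representative of its
  coset \<open>A e\<^sub>i r\<^sub>i\<close>. Letters act on normal forms from the left: \<open>t\<^sup>e\<close> splits \<open>c = k r\<close> with
  \<open>k \<in> A e\<close> and moves \<open>k\<close> across as \<open>tconj e k\<close>; \<open>push_syllable\<close> then prepends \<open>t\<^sup>e r\<close>,
  cancelling \<open>t\<^sup>e t\<^sup>-\<^sup>e\<close> when \<open>r = \<one>\<close>.\<close>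

definition push_syllable :: "bool \<Rightarrow> 'a \<Rightarrow> 'a \<Rightarrow> (bool \<times> 'a) list \<Rightarrow> 'a nf" where
  "push_syllable e c r L = (case L of
      [] \<Rightarrow> (c, [(e, r)])
    | (e', r') # L' \<Rightarrow> if r = \<one> \<and> e' \<noteq> e then (c \<otimes> r', L') else (c, (e, r) # L))"

definition nf_t :: "bool \<Rightarrow> 'a nf \<Rightarrow> 'a nf" where
  "nf_t e x = push_syllable e (tconj e (fst x \<otimes> inv coset_rep (A e) (fst x)))
                (coset_rep (A e) (fst x)) (snd x)"

fun nf_letter :: "'a hnn_letter \<Rightarrow> 'a nf \<Rightarrow> 'a nf" where
  "nf_letter (Gen h) x = (h \<otimes> fst x, snd x)"
| "nf_letter T x = nf_t True x"
| "nf_letter Tinv x = nf_t False x"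

definition nf :: "'a hnn_letter list \<Rightarrow> 'a nf" where
  "nf w = foldr nf_letter w (\<one>, [])"

fun reduced :: "(bool \<times> 'a) list \<Rightarrow> bool" where
  "reduced [] = True"
| "reduced ((e, r) # L) \<longleftrightarrow> r \<in> carrier H \<and> coset_rep (A e) r = r \<and> reduced L \<and>
     (case L of [] \<Rightarrow> True | (e', _) # _ \<Rightarrow> e' \<noteq> e \<longrightarrow> r \<noteq> \<one>)"

definition normal_forms :: "'a nf set" where
  "normal_forms = {x. fst x \<in> carrier H \<and> reduced (snd x)}"

lemma nf_letter_t_letter [simp]: "nf_letter (t_letter e) = nf_t e"
  by (auto simp: t_letter_def)

lemma push_syllable_cancel [simp]: "push_syllable e c \<one> ((\<not> e, r') # L') = (c \<otimes> r', L')"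
  by (simp add: push_syllable_def)

lemma push_syllable_cons:
  "\<not> (\<exists>r' L'. L = (\<not> e, r') # L' \<and> r = \<one>) \<Longrightarrow> push_syllable e c r L = (c, (e, r) # L)"
  by (auto simp: push_syllable_def split: list.split)

lemma push_syllable_normal_forms:
  "c \<in> carrier H \<Longrightarrow> r \<in> carrier H \<Longrightarrow> coset_rep (A e) r = r \<Longrightarrow> reduced L
    \<Longrightarrow> push_syllable e c r L \<in> normal_forms"
  by (cases L) (auto simp: push_syllable_def normal_forms_def)

lemma nf_t_decomp:
  assumes "c \<in> carrier H"
  obtains k r where "k \<in> A e" "r \<in> carrier H" "coset_rep (A e) c = r" "coset_rep (A e) r = r"
    "c = k \<otimes> r" "nf_t e (c, L) = push_syllable e (tconj e k) r L"
proof -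
  let ?r = "coset_rep (A e) c"
  have k: "c \<otimes> inv ?r \<in> A e" and r: "?r \<in> carrier H" "coset_rep (A e) ?r = ?r"
    using assms coset_rep_factor by simp_all
  have "c = c \<otimes> inv ?r \<otimes> ?r"
    using assms r by (simp add: m_assoc)
  with k r show thesis
    by (intro that[of "c \<otimes> inv ?r" ?r]) (simp_all add: nf_t_def)
qed

lemma nf_letter_normal_forms:
  assumes "x \<in> normal_forms" "hnn_word H [a]"
  shows "nf_letter a x \<in> normal_forms"
proof -
  obtain c L where x: "x = (c, L)" "c \<in> carrier H" "reduced L"
    using assms(1) by (cases x) (auto simp: normal_forms_def)
  have "nf_t e x \<in> normal_forms" for e
  proof -
    obtain k r where "k \<in> A e" "r \<in> carrier H" "coset_rep (A e) c = r" "coset_rep (A e) r = r"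
      "c = k \<otimes> r" "nf_t e (c, L) = push_syllable e (tconj e k) r L"
      by (rule nf_t_decomp[OF x(2)])
    then show ?thesis using x by (simp add: push_syllable_normal_forms tconj_carrier)
  qed
  then show ?thesis using assms x by (cases a) (auto simp: normal_forms_def)
qed

lemma foldr_nf_letter_normal_forms:
  "hnn_word H w \<Longrightarrow> x \<in> normal_forms \<Longrightarrow> foldr nf_letter w x \<in> normal_forms"
proof (induction w)
  case (Cons a w)
  then show ?case using nf_letter_normal_forms[of _ a] by (cases a) auto
qed simp

lemma nf_normal_forms: "hnn_word H w \<Longrightarrow> nf w \<in> normal_forms"
  using foldr_nf_letter_normal_forms by (simp add: nf_def normal_forms_def)

lemma nf_t_inverse:
  assumes "x \<in> normal_forms"
  shows "nf_t e (nf_t (\<not> e) x) = x"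
proof -
  obtain c L where x: "x = (c, L)" "c \<in> carrier H" "reduced L"
    using assms by (cases x) (auto simp: normal_forms_def)
  obtain k r where k: "k \<in> A (\<not> e)" "r \<in> carrier H" "coset_rep (A (\<not> e)) c = r"
    "coset_rep (A (\<not> e)) r = r" "c = k \<otimes> r"
    and step: "nf_t (\<not> e) (c, L) = push_syllable (\<not> e) (tconj (\<not> e) k) r L"
    by (rule nf_t_decomp[OF x(2)])
  define k' where "k' = tconj (\<not> e) k"
  have k': "k' \<in> A e" "k' \<in> carrier H" "tconj e k' = k"
    using k tconj_in_A[of k "\<not> e"] tconj_tconj[of k "\<not> e"] A_carrier by (auto simp: k'_def)
  have kc: "k \<in> carrier H" using k(1) A_carrier by blast
  show ?thesis
  proof (cases "\<exists>r' L'. L = (e, r') # L' \<and> r = \<one>")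
    case True
    then obtain r' L' where L: "L = (e, r') # L'" and r: "r = \<one>" by blast
    have r': "r' \<in> carrier H" "coset_rep (A e) r' = r'"
      and no_cancel: "\<not> (\<exists>r'' L''. L' = (\<not> e, r'') # L'' \<and> r' = \<one>)"
      using x(3) L by (auto split: list.split)
    have "nf_t (\<not> e) x = (k' \<otimes> r', L')"
      using step x(1) L r push_syllable_cancel[of "\<not> e"] by (simp add: k'_def)
    moreover have "coset_rep (A e) (k' \<otimes> r') = r'"
      using coset_rep_mult_left k' r' by simp
    moreover have "k' \<otimes> r' \<otimes> inv r' = k'"
      using k' r' by (simp add: m_assoc)
    ultimately show ?thesis
      using x k' kc r k(5) push_syllable_cons[OF no_cancel] L by (simp add: nf_t_def)
  next
    case False
    then have "nf_t (\<not> e) x = (k', (\<not> e, r) # L)"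
      using step x(1) push_syllable_cons[of L "\<not> e" r] by (simp add: k'_def)
    moreover have "coset_rep (A e) k' = \<one>"
      using coset_rep_eq_one_iff k' by simp
    ultimately show ?thesis
      using x k k' kc push_syllable_cancel[of e] by (simp add: nf_t_def)
  qed
qed

lemma nf_t_conj:
  assumes "x \<in> normal_forms" "k \<in> K"
  shows "nf_t True (nf_letter (Gen k) (nf_t False x)) = nf_letter (Gen (\<phi> k)) x"
proof -
  obtain c L where x: "x = (c, L)" "c \<in> carrier H" "reduced L"
    using assms by (cases x) (auto simp: normal_forms_def)
  obtain p r where p: "p \<in> A False" "r \<in> carrier H" "coset_rep (A False) c = r"
    "coset_rep (A False) r = r" "c = p \<otimes> r"
    and step: "nf_t False (c, L) = push_syllable False (tconj False p) r L"
    by (rule nf_t_decomp[OF x(2)])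
  define k' where "k' = k \<otimes> tconj False p"
  have kc: "k \<in> carrier H" "p \<in> carrier H" "tconj False p \<in> carrier H"
    using assms(2) p(1) K_carrier A_carrier tconj_carrier by auto
  have k': "k' \<in> K" "k' \<in> carrier H" "\<phi> k' = \<phi> k \<otimes> p"
    using assms(2) kc tconj_in_A[OF p(1)] tconj_tconj[OF p(1)] subgroup.m_closed[OF subgroup_K]
    by (auto simp: k'_def A_def tconj_def)
  show ?thesis
  proof (cases "\<exists>r' L'. L = (True, r') # L' \<and> r = \<one>")
    case True
    then obtain r' L' where L: "L = (True, r') # L'" and r: "r = \<one>" by blast
    have r': "r' \<in> carrier H" "coset_rep K r' = r'"
      and no_cancel: "\<not> (\<exists>r'' L''. L' = (\<not> True, r'') # L'' \<and> r' = \<one>)"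
      using x(3) L by (auto simp: A_def split: list.split)
    have "nf_letter (Gen k) (nf_t False x) = (k' \<otimes> r', L')"
      using step x(1) L r push_syllable_cancel[of False] kc r' by (simp add: k'_def m_assoc)
    moreover have "coset_rep K (k' \<otimes> r') = r'"
      using coset_rep_mult_left[OF subgroup_K] k' r' by simp
    moreover have "k' \<otimes> r' \<otimes> inv r' = k'"
      using k' r' by (simp add: m_assoc)
    ultimately show ?thesis
      using x p(5) k' kc r push_syllable_cons[OF no_cancel] L
      by (simp add: nf_t_def A_def tconj_def)
  next
    case False
    then have "nf_letter (Gen k) (nf_t False x) = (k', (False, r) # L)"
      using step x(1) push_syllable_cons[of L False r] by (simp add: k'_def)
    moreover have "coset_rep K k' = \<one>"
      using coset_rep_eq_one_iff[OF subgroup_K] k' by simp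
    ultimately show ?thesis
      using x p(2,5) k' kc push_syllable_cancel[of True]
      by (simp add: nf_t_def m_assoc A_def tconj_def)
  qed
qed

lemma foldr_nf_letter_hnn_rel:
  "hnn_rel H K \<phi> a b \<Longrightarrow> x \<in> normal_forms \<Longrightarrow> foldr nf_letter a x = foldr nf_letter b x"
proof (induction arbitrary: x rule: hnn_rel.induct)
  case (mult u v h1 h2)
  then have "fst (foldr nf_letter v x) \<in> carrier H"
    using foldr_nf_letter_normal_forms by (simp add: normal_forms_def)
  then show ?case using mult by (simp add: m_assoc)
next
  case (one u v)
  then have "fst (foldr nf_letter v x) \<in> carrier H"
    using foldr_nf_letter_normal_forms by (simp add: normal_forms_def)
  then show ?case by simp
next
  case (t_tinv u v)
  then show ?case using foldr_nf_letter_normal_forms nf_t_inverse[of _ True] by simp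
next
  case (tinv_t u v)
  then show ?case using foldr_nf_letter_normal_forms nf_t_inverse[of _ False] by simp
next
  case (conj u v k)
  then show ?case using foldr_nf_letter_normal_forms nf_t_conj by simp
qed simp_all

fun syllables_word :: "(bool \<times> 'a) list \<Rightarrow> 'a hnn_letter list" where
  "syllables_word [] = []"
| "syllables_word ((e, r) # L) = t_letter e # Gen r # syllables_word L"

definition nf_word :: "'a nf \<Rightarrow> 'a hnn_letter list" where
  "nf_word x = Gen (fst x) # syllables_word (snd x)"

lemma hnn_word_syllables_word: "reduced L \<Longrightarrow> hnn_word H (syllables_word L)"
  by (induction L rule: syllables_word.induct) auto

lemma hnn_rel_nf_t:
  assumes "x \<in> normal_forms"
  shows "hnn_rel H K \<phi> (t_letter e # nf_word x) (nf_word (nf_t e x))"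
proof -
  obtain c L where x: "x = (c, L)" "c \<in> carrier H" "reduced L"
    using assms by (cases x) (auto simp: normal_forms_def)
  obtain k r where k: "k \<in> A e" "r \<in> carrier H" "coset_rep (A e) c = r"
    "coset_rep (A e) r = r" "c = k \<otimes> r"
    and step: "nf_t e (c, L) = push_syllable e (tconj e k) r L"
    by (rule nf_t_decomp[OF x(2)])
  let ?w = "syllables_word L"
  have w: "hnn_word H ?w" using x(3) hnn_word_syllables_word by blast
  have kc: "k \<in> carrier H" "tconj e k \<in> carrier H"
    using k(1) A_carrier tconj_carrier by auto
  have "hnn_rel H K \<phi> (t_letter e # nf_word x) (t_letter e # Gen k # Gen r # ?w)"
    using hnn_rel_cong[OF hnn_rel.sym[OF hnn_rel_mult_letters[of k H r K \<phi>]], of "[t_letter e]" ?w]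
      x(1) k w kc by (simp add: nf_word_def)
  also have "hnn_rel H K \<phi> \<dots> (t_letter e # Gen k # t_letter (\<not> e) # t_letter e # Gen r # ?w)"
    using hnn_rel_cong[OF hnn_rel.sym[OF hnn_rel_t_cancel[of "\<not> e"]],
        of "[t_letter e, Gen k]" "Gen r # ?w"] k w kc by simp
  also have "hnn_rel H K \<phi> \<dots> (Gen (tconj e k) # t_letter e # Gen r # ?w)"
    using hnn_rel_cong[OF hnn_rel_tconj[OF k(1)], of "[]" "t_letter e # Gen r # ?w"] k w by simp
  finally have rel: "hnn_rel H K \<phi> (t_letter e # nf_word x)
      (Gen (tconj e k) # t_letter e # Gen r # ?w)" .
  show ?thesis
  proof (cases "\<exists>r' L'. L = (\<not> e, r') # L' \<and> r = \<one>")
    case True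
    then obtain r' L' where L: "L = (\<not> e, r') # L'" and r: "r = \<one>" by blast
    let ?w' = "syllables_word L'"
    have r': "r' \<in> carrier H" "hnn_word H ?w'"
      using x(3) L hnn_word_syllables_word by auto
    note rel
    also have "hnn_rel H K \<phi> (Gen (tconj e k) # t_letter e # Gen r # ?w)
        (Gen (tconj e k) # t_letter e # t_letter (\<not> e) # Gen r' # ?w')"
      using hnn_rel_cong[OF hnn_rel_one_letter[of H K \<phi>], of "[Gen (tconj e k), t_letter e]"
          "t_letter (\<not> e) # Gen r' # ?w'"] L r r' kc by simp
    also have "hnn_rel H K \<phi> \<dots> (Gen (tconj e k) # Gen r' # ?w')"
      using hnn_rel_cong[OF hnn_rel_t_cancel[of e], of "[Gen (tconj e k)]" "Gen r' # ?w'"]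
        r' kc by simp
    also have "hnn_rel H K \<phi> \<dots> (Gen (tconj e k \<otimes> r') # ?w')"
      using hnn_rel_cong[OF hnn_rel_mult_letters[of "tconj e k" H r' K \<phi>], of "[]" ?w'] r' kc by simp
    finally show ?thesis
      using x(1) step L r push_syllable_cancel by (simp add: nf_word_def)
  next
    case False
    then show ?thesis
      using rel x(1) step push_syllable_cons[OF False] by (simp add: nf_word_def)
  qed
qed

lemma hnn_rel_nf_letter:
  assumes "x \<in> normal_forms" "hnn_word H [a]"
  shows "hnn_rel H K \<phi> (a # nf_word x) (nf_word (nf_letter a x))"
proof (cases a)
  case (Gen h)
  have "fst x \<in> carrier H" "hnn_word H (syllables_word (snd x))"
    using assms(1) hnn_word_syllables_word by (auto simp: normal_forms_def)
  then show ?thesis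
    using Gen assms(2) hnn_rel_cong[OF hnn_rel_mult_letters[of h H "fst x" K \<phi>], of "[]"]
    by (simp add: nf_word_def)
next
  case T
  then show ?thesis using hnn_rel_nf_t[OF assms(1), of True] by (simp add: t_letter_def)
next
  case Tinv
  then show ?thesis using hnn_rel_nf_t[OF assms(1), of False] by (simp add: t_letter_def)
qed

lemma hnn_rel_nf_word: "hnn_word H w \<Longrightarrow> hnn_rel H K \<phi> w (nf_word (nf w))"
proof (induction w)
  case Nil
  show ?case using hnn_rel.sym[OF hnn_rel_one_letter] by (simp add: nf_def nf_word_def)
next
  case (Cons a w)
  have w: "hnn_word H w" and a: "hnn_word H [a]"
    using Cons.prems by (cases a; simp)+
  have "hnn_rel H K \<phi> (a # w) (a # nf_word (nf w))"
    using hnn_rel_cong[OF Cons.IH[OF w] a, of "[]"] by simp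
  also have "hnn_rel H K \<phi> \<dots> (nf_word (nf (a # w)))"
    using hnn_rel_nf_letter[OF nf_normal_forms[OF w] a] by (simp add: nf_def)
  finally show ?case .
qed

theorem hnn_rel_iff_nf_eq:
  assumes "hnn_word H a" "hnn_word H b"
  shows "hnn_rel H K \<phi> a b \<longleftrightarrow> nf a = nf b"
proof
  assume "hnn_rel H K \<phi> a b"
  then show "nf a = nf b"
    using foldr_nf_letter_hnn_rel by (simp add: nf_def normal_forms_def)
next
  assume "nf a = nf b"
  then show "hnn_rel H K \<phi> a b"
    using hnn_rel_nf_word[OF assms(1)] hnn_rel.sym[OF hnn_rel_nf_word[OF assms(2)]]
    by (metis hnn_rel.trans)
qed

lemma foldr_syllables_word_right_mult:
  assumes "reduced L" "L \<noteq> []" "h \<in> carrier H"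
  shows "\<exists>c L'. foldr nf_letter (syllables_word L) (h, []) = (c, L') \<and> L' \<noteq> [] \<and>
    fst (hd L') = fst (hd L) \<and> c \<in> A (\<not> fst (hd L)) \<and>
    last L' = (fst (last L), coset_rep (A (fst (last L))) (snd (last L) \<otimes> h))"
  using assms
proof (induction L rule: reduced.induct)
  case (2 e r L)
  then have r: "r \<in> carrier H" "coset_rep (A e) r = r" by auto
  show ?case
  proof (cases "L = []")
    case True
    obtain k r' where "k \<in> A e" "coset_rep (A e) (r \<otimes> h) = r'"
      "nf_t e (r \<otimes> h, []) = push_syllable e (tconj e k) r' []"
      using nf_t_decomp[of "r \<otimes> h" e "[]"] r "2.prems"(3) by blast
    then show ?thesis using True tconj_in_A by (simp add: push_syllable_def)
  next
    case False
    then obtain e' r1 L1 where L: "L = (e', r1) # L1" by (metis list.exhaust prod.exhaust)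
    obtain c L' where IH: "foldr nf_letter (syllables_word L) (h, []) = (c, L')" "L' \<noteq> []"
      "fst (hd L') = e'" "c \<in> A (\<not> e')"
      "last L' = (fst (last L), coset_rep (A (fst (last L))) (snd (last L) \<otimes> h))"
      using "2.IH" "2.prems" False L by auto
    have c: "c \<in> carrier H" using IH(4) A_carrier by blast
    obtain k r' where k: "k \<in> A e" "coset_rep (A e) (r \<otimes> c) = r'"
      and step: "nf_t e (r \<otimes> c, L') = push_syllable e (tconj e k) r' L'"
      using nf_t_decomp[of "r \<otimes> c" e L'] r c by blast
    have no_cancel: "\<not> (\<exists>r'' L''. L' = (\<not> e, r'') # L'' \<and> r' = \<one>)"
    proof
      assume "\<exists>r'' L''. L' = (\<not> e, r'') # L'' \<and> r' = \<one>"
      then have "e' \<noteq> e" "r \<otimes> c \<in> A e"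
        using IH(3) k(2) coset_rep_eq_one_iff[of "A e" "r \<otimes> c"] r c by auto
      moreover from this have "c \<in> A e" using IH(4) by (cases e) auto
      ultimately have "r \<otimes> c \<otimes> inv c \<in> A e"
        using subgroup.m_closed[OF subgroup_A] subgroup.m_inv_closed[OF subgroup_A] by blast
      then have "coset_rep (A e) r = \<one>"
        using r c coset_rep_eq_one_iff[of "A e" r] by (simp add: m_assoc)
      then show False using "2.prems"(1) L r \<open>e' \<noteq> e\<close> by auto
    qed
    show ?thesis
      using IH L False step push_syllable_cons[OF no_cancel] tconj_in_A[OF k(1)] by auto
  qed
qed simp

lemma reduced_last:
  "reduced L \<Longrightarrow> L \<noteq> [] \<Longrightarrow>
    snd (last L) \<in> carrier H \<and> coset_rep (A (fst (last L))) (snd (last L)) = snd (last L)"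
  by (induction L rule: reduced.induct) (auto split: list.split_asm)

lemma nf_append_Gen:
  assumes "hnn_word H w" "h \<in> carrier H" "nf w = (c, L)" "L \<noteq> []"
  shows "\<exists>c' L'. nf (w @ [Gen h]) = (c', L') \<and>
    last L' = (fst (last L), coset_rep (A (fst (last L))) (snd (last L) \<otimes> h))"
proof -
  have "nf (w @ [Gen h]) = foldr nf_letter (nf_word (nf w)) (h, [])"
    using foldr_nf_letter_hnn_rel[OF hnn_rel_nf_word[OF assms(1)], of "(h, [])"] assms(2)
    by (simp add: nf_def normal_forms_def)
  moreover have "reduced L"
    using nf_normal_forms[OF assms(1)] assms(3) by (simp add: normal_forms_def)
  ultimately show ?thesis
    using foldr_syllables_word_right_mult[OF _ assms(4,2)] assms(3) by (auto simp: nf_word_def)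
qed

sublocale G: group "HNN H K \<phi>"
  using group_HNN is_group .

lemma hnn_class_eq_iff_nf_eq:
  "hnn_word H a \<Longrightarrow> hnn_word H b \<Longrightarrow> hnn_class H K \<phi> a = hnn_class H K \<phi> b \<longleftrightarrow> nf a = nf b"
  using hnn_class_eq_iff hnn_rel_iff_nf_eq is_group by blast

lemma hnn_class_carrier: "hnn_word H w \<Longrightarrow> hnn_class H K \<phi> w \<in> carrier (HNN H K \<phi>)"
  by (auto simp: carrier_HNN)

sublocale emb: group_hom H "HNN H K \<phi>" "hnn_emb H K \<phi>"
proof unfold_locales
  show "hnn_emb H K \<phi> \<in> hom H (HNN H K \<phi>)"
    using hnn_class_carrier
    by (auto simp: hom_def hnn_emb_def mult_HNN is_group hnn_class_eq_iff
        intro: hnn_rel.sym[OF hnn_rel_mult_letters])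
qed

lemma commutes_with_H_imp_in_H:
  assumes "K \<noteq> carrier H" "z \<in> carrier (HNN H K \<phi>)"
    and commute: "\<And>h. h \<in> carrier H \<Longrightarrow>
      hnn_emb H K \<phi> h \<otimes>\<^bsub>HNN H K \<phi>\<^esub> z = z \<otimes>\<^bsub>HNN H K \<phi>\<^esub> hnn_emb H K \<phi> h"
  obtains c where "c \<in> carrier H" "z = hnn_emb H K \<phi> c"
proof -
  obtain w where w: "hnn_word H w" "z = hnn_class H K \<phi> w"
    using assms(2) by (auto simp: carrier_HNN)
  obtain c L where nf_w: "nf w = (c, L)" by fastforce
  have c: "c \<in> carrier H" and L: "reduced L"
    using nf_normal_forms[OF w(1)] nf_w by (simp_all add: normal_forms_def)
  have "L = []"
  proof (rule ccontr)
    assume "L \<noteq> []"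
    define e where "e = fst (last L)"
    define r where "r = snd (last L)"
    have r: "r \<in> carrier H" "coset_rep (A e) r = r"
      using reduced_last[OF L \<open>L \<noteq> []\<close>] by (simp_all add: e_def r_def)
    have "coset_rep (A e) (r \<otimes> h) = coset_rep (A e) r" if h: "h \<in> carrier H" for h
    proof -
      have "nf (w @ [Gen h]) = nf (Gen h # w)"
        using commute[OF h] w h hnn_class_eq_iff_nf_eq[of "Gen h # w" "w @ [Gen h]"]
        by (simp add: hnn_emb_def mult_HNN is_group)
      also have "\<dots> = (h \<otimes> c, L)"
        using nf_w by (simp add: nf_def)
      finally have "last L = (e, coset_rep (A e) (r \<otimes> h))"
        using nf_append_Gen[OF w(1) h nf_w \<open>L \<noteq> []\<close>] by (auto simp: e_def r_def)
      then show ?thesis using r(2) r_def by (metis snd_conv)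
    qed
    then have "carrier H \<subseteq> A e"
      using coset_rep_right_mult_const_imp_carrier[OF subgroup_A r(1)] by blast
    then show False
      using A_ne_carrier[OF assms(1)] subgroup.subset[OF subgroup_A] by blast
  qed
  then have "nf w = nf [Gen c]"
    using nf_w c by (simp add: nf_def)
  then have "z = hnn_emb H K \<phi> c"
    using w c hnn_class_eq_iff_nf_eq by (simp add: hnn_emb_def)
  then show thesis using c that by blast
qed

lemma emb_t_emb_eq_imp_in_K:
  assumes "a \<in> carrier H" "b \<in> carrier H" "w \<in> carrier H"
    and "hnn_emb H K \<phi> a \<otimes>\<^bsub>HNN H K \<phi>\<^esub> hnn_t H K \<phi> \<otimes>\<^bsub>HNN H K \<phi>\<^esub> hnn_emb H K \<phi> w
       = hnn_emb H K \<phi> b \<otimes>\<^bsub>HNN H K \<phi>\<^esub> hnn_t H K \<phi>"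
  shows "w \<in> K"
proof -
  have "nf [Gen a, T, Gen w] = nf [Gen b, T]"
    using assms hnn_class_eq_iff_nf_eq[of "[Gen a, T, Gen w]" "[Gen b, T]"]
    by (simp add: hnn_emb_def hnn_t_def mult_HNN is_group)
  then have "coset_rep K w = coset_rep K \<one>"
    using assms(3) by (simp add: nf_def nf_t_def A_def push_syllable_def)
  moreover have "coset_rep K \<one> = \<one>"
    using coset_rep_eq_one_iff[OF subgroup_K] subgroup.one_closed[OF subgroup_K] by simp
  ultimately show ?thesis
    using coset_rep_eq_one_iff[OF subgroup_K] assms(3) by simp
qed

end

theorem lemma4p3:
  fixes H :: "'a monoid" and K :: "'a set" and \<phi> :: "'a \<Rightarrow> 'a"
    and g :: "'a hnn_letter list set" and x y :: 'a
  assumes "group H" and "subgroup K H" and "K \<noteq> carrier H" and "\<phi> \<in> iso H H"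
    and "g \<in> carrier (HNN H K \<phi>)" and "x \<in> carrier H" and "y \<in> carrier H"
    and "inv\<^bsub>HNN H K \<phi>\<^esub> g \<otimes>\<^bsub>HNN H K \<phi>\<^esub> hnn_emb H K \<phi> y \<otimes>\<^bsub>HNN H K \<phi>\<^esub> hnn_t H K \<phi>
           \<otimes>\<^bsub>HNN H K \<phi>\<^esub> g
         = inv\<^bsub>HNN H K \<phi>\<^esub> hnn_emb H K \<phi> x \<otimes>\<^bsub>HNN H K \<phi>\<^esub> hnn_emb H K \<phi> (\<phi> x)
           \<otimes>\<^bsub>HNN H K \<phi>\<^esub> hnn_t H K \<phi>"
    and "\<forall>h \<in> carrier H.
           inv\<^bsub>HNN H K \<phi>\<^esub> g \<otimes>\<^bsub>HNN H K \<phi>\<^esub> hnn_emb H K \<phi> h \<otimes>\<^bsub>HNN H K \<phi>\<^esub> g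
         = inv\<^bsub>HNN H K \<phi>\<^esub> hnn_emb H K \<phi> x \<otimes>\<^bsub>HNN H K \<phi>\<^esub> hnn_emb H K \<phi> h
           \<otimes>\<^bsub>HNN H K \<phi>\<^esub> hnn_emb H K \<phi> x"
  shows "g \<in> hnn_emb H K \<phi> ` K"
proof -
  interpret hnn_extension H K \<phi>
    using assms(1,2,4) by (simp add: hnn_extension_def hnn_extension_axioms_def)
  let ?e = "hnn_emb H K \<phi>"
  have "?e h \<otimes>\<^bsub>HNN H K \<phi>\<^esub> (g \<otimes>\<^bsub>HNN H K \<phi>\<^esub> inv\<^bsub>HNN H K \<phi>\<^esub> ?e x)
      = (g \<otimes>\<^bsub>HNN H K \<phi>\<^esub> inv\<^bsub>HNN H K \<phi>\<^esub> ?e x) \<otimes>\<^bsub>HNN H K \<phi>\<^esub> ?e h" if "h \<in> carrier H" for h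
    using G.conj_eq_imp_commute assms(5,6,9) that by simp
  then obtain c where c: "c \<in> carrier H" "g \<otimes>\<^bsub>HNN H K \<phi>\<^esub> inv\<^bsub>HNN H K \<phi>\<^esub> ?e x = ?e c"
    using commutes_with_H_imp_in_H[OF assms(3)] assms(5,6)
    by (metis G.m_closed G.inv_closed emb.hom_closed)
  define w where "w = c \<otimes>\<^bsub>H\<^esub> x"
  have w: "w \<in> carrier H" "g = ?e w"
    using c assms(5,6) G.inv_solve_right' by (simp_all add: w_def)
  have eq: "?e (inv\<^bsub>H\<^esub> w \<otimes>\<^bsub>H\<^esub> y) \<otimes>\<^bsub>HNN H K \<phi>\<^esub> hnn_t H K \<phi> \<otimes>\<^bsub>HNN H K \<phi>\<^esub> ?e w
      = ?e (inv\<^bsub>H\<^esub> x \<otimes>\<^bsub>H\<^esub> \<phi> x) \<otimes>\<^bsub>HNN H K \<phi>\<^esub> hnn_t H K \<phi>"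
    using assms(6-8) w by simp
  have "w \<in> K"
    using emb_t_emb_eq_imp_in_K[OF _ _ w(1) eq] assms(6,7) w(1) \<phi>.hom_closed by simp
  then show ?thesis using w(2) by blast
qed

end
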